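(* Let $(H,+,\circ)$ be a commutative multiplicative hyperring with identity of characteristic $2$, and let $P$ be a proper strong $\mathcal{C}$-hyperideal of $H$. If $\mathrm{rad}(P)=P$, then $P$ is an sdf-absorbing hyperideal of $H$.
   Context: A commutative multiplicative hyperring $(H,+,\circ)$ consists of an abelian group $(H,+)$ and an associative, commutative hyperoperation $\circ: H\times H\to P^*(H)$ with $x\circ(y+z)\subseteq x\circ y+x\circ z$ and $x\circ(-y)=-(x\circ y)=(-x)\circ y$. For subsets $A,B$, $A\circ B=\bigcup_{a\in A,b\in B}a\circ b$, $A\pm B=\{a\pm b\}$; $x^n=x\circ\cdots\circ x$. Identity: $x\in x\circ 1$ for all $x$. $H$ has characteristic $\alpha$ if $\alpha$ is the least positive integer with $\alpha x=0$ for all $x\in H$. A hyperideal is a nonempty $P$ with $x-y\in P$ and $r\circ x\subseteq P$ for $x,y\in P$, $r\in H$. A proper hyperideal $P$ is prime if $x\circ y\subseteq P$ implies $x\in P$ or $y\in P$; $\mathrm{rad}(P)$ is the intersection of the prime hyperideals containing $P$ ($H$ if none). Let $\mathcal{C}=\{c_1\circ\cdots\circ c_n: c_i\in H,n\in\mathbb{N}\}$ and $\mathfrak{C}=\{\sum_{i=1}^n C_i: C_i\in\mathcal{C}, n\in\mathbb{N}\}$; a hyperideal $P$ is a strong $\mathcal{C}$-hyperideal if for every $D\in\mathfrak{C}$, $D\cap P\neq\varnothing$ implies $D\subseteq P$. A proper hyperideal $P$ is sdf-absorbing if whenever $0\neq x,y\in H$ and $x^2-y^2\subseteq P$, then $x-y\in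 P$ or $x+y\in P$. *)

theory Defs
  imports Main
begin

text \<open>The additive abelian group (H,+) is the ambient type 'a :: ab_group_add (H = UNIV);
  the hyperoperation is m :: 'a => 'a => 'a set.\<close>

definition hmult_set :: "('a \<Rightarrow> 'a \<Rightarrow> 'a set) \<Rightarrow> 'a set \<Rightarrow> 'a set \<Rightarrow> 'a set" where
  "hmult_set m A B = (\<Union>a\<in>A. \<Union>b\<in>B. m a b)"

definition set_plus :: "'a::ab_group_add set \<Rightarrow> 'a set \<Rightarrow> 'a set" where
  "set_plus A B = {a + b | a b. a \<in> A \<and> b \<in> B}"

definition set_minus :: "'a::ab_group_add set \<Rightarrow> 'a set \<Rightarrow> 'a set" where
  "set_minus A B = {a - b | a b. a \<in> A \<and> b \<in> B}"

definition comm_mult_hyperring :: "('a::ab_group_add \<Rightarrow> 'a \<Rightarrow> 'a set) \<Rightarrow> bool" where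
  "comm_mult_hyperring m \<longleftrightarrow>
     (\<forall>x y. m x y \<noteq> {}) \<and>
     (\<forall>x y z. hmult_set m (m x y) {z} = hmult_set m {x} (m y z)) \<and>
     (\<forall>x y. m x y = m y x) \<and>
     (\<forall>x y z. m x (y + z) \<subseteq> set_plus (m x y) (m x z)) \<and>
     (\<forall>x y. m x (- y) = uminus ` (m x y) \<and> uminus ` (m x y) = m (- x) y)"

definition has_identity :: "('a \<Rightarrow> 'a \<Rightarrow> 'a set) \<Rightarrow> bool" where
  "has_identity m \<longleftrightarrow> (\<exists>u. \<forall>x. x \<in> m x u)"

definition nsum_elt :: "nat \<Rightarrow> 'a::ab_group_add \<Rightarrow> 'a" where
  "nsum_elt n x = (((+) x) ^^ n) 0"

definition has_characteristic :: "'a::ab_group_add itself \<Rightarrow> nat \<Rightarrow> bool" where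
  "has_characteristic _ \<alpha> \<longleftrightarrow>
     0 < \<alpha> \<and> (\<forall>x::'a. nsum_elt \<alpha> x = 0) \<and>
     (\<forall>n. 0 < n \<and> n < \<alpha> \<longrightarrow> \<not> (\<forall>x::'a. nsum_elt n x = 0))"

definition hyperideal :: "('a::ab_group_add \<Rightarrow> 'a \<Rightarrow> 'a set) \<Rightarrow> 'a set \<Rightarrow> bool" where
  "hyperideal m P \<longleftrightarrow> P \<noteq> {} \<and> (\<forall>x\<in>P. \<forall>y\<in>P. x - y \<in> P) \<and> (\<forall>r x. x \<in> P \<longrightarrow> m r x \<subseteq> P)"

definition prime_hyperideal :: "('a::ab_group_add \<Rightarrow> 'a \<Rightarrow> 'a set) \<Rightarrow> 'a set \<Rightarrow> bool" where
  "prime_hyperideal m P \<longleftrightarrow> hyperideal m P \<and> P \<noteq> UNIV \<and>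
     (\<forall>x y. m x y \<subseteq> P \<longrightarrow> x \<in> P \<or> y \<in> P)"

text \<open>Intersection of the prime hyperideals containing P (UNIV = H if there are none).\<close>
definition hrad :: "('a::ab_group_add \<Rightarrow> 'a \<Rightarrow> 'a set) \<Rightarrow> 'a set \<Rightarrow> 'a set" where
  "hrad m P = \<Inter> {Q. prime_hyperideal m Q \<and> P \<subseteq> Q}"

inductive_set Cprods :: "('a \<Rightarrow> 'a \<Rightarrow> 'a set) \<Rightarrow> 'a set set" for m where
  single: "{c} \<in> Cprods m"
| step: "A \<in> Cprods m \<Longrightarrow> hmult_set m A {c} \<in> Cprods m"

inductive_set Csums :: "('a::ab_group_add \<Rightarrow> 'a \<Rightarrow> 'a set) \<Rightarrow> 'a set set" for m where
  single: "C \<in> Cprods m \<Longrightarrow> C \<in> Csums m"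
| step: "D \<in> Csums m \<Longrightarrow> C \<in> Cprods m \<Longrightarrow> set_plus D C \<in> Csums m"

definition strong_C_hyperideal :: "('a::ab_group_add \<Rightarrow> 'a \<Rightarrow> 'a set) \<Rightarrow> 'a set \<Rightarrow> bool" where
  "strong_C_hyperideal m P \<longleftrightarrow> hyperideal m P \<and>
     (\<forall>D\<in>Csums m. D \<inter> P \<noteq> {} \<longrightarrow> D \<subseteq> P)"

definition sdf_absorbing :: "('a::ab_group_add \<Rightarrow> 'a \<Rightarrow> 'a set) \<Rightarrow> 'a set \<Rightarrow> bool" where
  "sdf_absorbing m P \<longleftrightarrow> hyperideal m P \<and> P \<noteq> UNIV \<and>
     (\<forall>x y. x \<noteq> 0 \<longrightarrow> y \<noteq> 0 \<longrightarrow> set_minus (m x x) (m y y) \<subseteq> P \<longrightarrow>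
        x - y \<in> P \<or> x + y \<in> P)"

end

theory Submission
  imports Defs
begin

text \<open>It suffices to put x + y into P. By distributivity (x + y)\<circ>(x + y) lies in the sum
  D = x\<circ>x + x\<circ>y + y\<circ>x + y\<circ>y of hyperproducts. Choosing the same b \<in> x\<circ>y = y\<circ>x twice,
  characteristic 2 makes a + b + b + d = a - d, an element of x\<circ>x - y\<circ>y \<subseteq> P, so the strong
  C-property forces D \<subseteq> P. Hence (x + y)\<circ>(x + y) \<subseteq> P, so x + y lies in every prime
  hyperideal containing P, that is, in rad(P) = P.\<close>

lemma has_characteristic_2_add_self:
  assumes "has_characteristic TYPE('a::ab_group_add) 2"
  shows "(x::'a) + x = 0"
proof -
  have "nsum_elt 2 x = 0"
    using assms unfolding has_characteristic_def by blast
  then show ?thesis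
    by (simp add: nsum_elt_def numeral_2_eq_2)
qed

lemma hmult_in_Cprods: "m x y \<in> Cprods m"
  using Cprods.step[OF Cprods.single, of m x y] by (simp add: hmult_set_def)

lemma hmult_add_add_subset:
  assumes "comm_mult_hyperring m"
  shows "m (x + y) (z + w) \<subseteq>
    set_plus (set_plus (set_plus (m x z) (m x w)) (m y z)) (m y w)"
proof
  have comm: "\<And>a b. m a b = m b a"
    and distr: "\<And>a b c. m a (b + c) \<subseteq> set_plus (m a b) (m a c)"
    using assms unfolding comm_mult_hyperring_def by auto
  fix t
  assume "t \<in> m (x + y) (z + w)"
  then obtain u v where t: "t = u + v" and "u \<in> m z (x + y)" and "v \<in> m w (x + y)"
    using distr[of "x + y" z w] comm unfolding set_plus_def by blast
  then obtain a c b d where "u = a + c" "a \<in> m x z" "c \<in> m y z"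
    and "v = b + d" "b \<in> m x w" "d \<in> m y w"
    using distr[of z x y] distr[of w x y] comm unfolding set_plus_def by blast
  moreover have "t = a + b + c + d"
    using t \<open>u = a + c\<close> \<open>v = b + d\<close> by (simp add: ac_simps)
  ultimately show "t \<in> set_plus (set_plus (set_plus (m x z) (m x w)) (m y z)) (m y w)"
    unfolding set_plus_def by blast
qed

lemma strong_C_hyperideal_square_add_subset:
  fixes m :: "'a::ab_group_add \<Rightarrow> 'a \<Rightarrow> 'a set"
  assumes hyperring: "comm_mult_hyperring m"
    and char_2: "\<And>z::'a. z + z = 0"
    and strong: "strong_C_hyperideal m P"
    and squares: "set_minus (m x x) (m y y) \<subseteq> P"
  shows "m (x + y) (x + y) \<subseteq> P"
proof -
  define D where "D = set_plus (set_plus (set_plus (m x x) (m x y)) (m y x)) (m y y)"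
  have "D \<in> Csums m"
    unfolding D_def by (intro Csums.step Csums.single hmult_in_Cprods)
  have nonempty: "\<And>a b. m a b \<noteq> {}" and comm: "\<And>a b. m a b = m b a"
    using hyperring unfolding comm_mult_hyperring_def by auto
  obtain a b d where a: "a \<in> m x x" and b: "b \<in> m x y" and d: "d \<in> m y y"
    using nonempty by (meson ex_in_conv)
  have "a + b + b + d \<in> D"
    unfolding D_def set_plus_def using a b d comm by blast
  moreover have "a + b + b + d = a - d"
    using char_2[of b] char_2[of d] by (metis add.assoc add.right_neutral diff_add_cancel)
  moreover have "a - d \<in> P"
    using squares a d unfolding set_minus_def by blast
  ultimately have "D \<subseteq> P"
    using strong \<open>D \<in> Csums m\<close> unfolding strong_C_hyperideal_def by auto
  moreover have "m (x + y) (x + y) \<subseteq> D"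
    unfolding D_def by (rule hmult_add_add_subset[OF hyperring])
  ultimately show ?thesis
    by blast
qed

lemma mem_hrad_if_square_subset:
  assumes "m x x \<subseteq> P"
  shows "x \<in> hrad m P"
  using assms unfolding hrad_def prime_hyperideal_def by blast

theorem mainTheorem2:
  fixes m :: "'a::ab_group_add \<Rightarrow> 'a \<Rightarrow> 'a set" and P :: "'a set"
  assumes "comm_mult_hyperring m"
    and "has_identity m"
    and "has_characteristic TYPE('a) 2"
    and "strong_C_hyperideal m P"
    and "P \<noteq> UNIV"
    and "hrad m P = P"
  shows "sdf_absorbing m P"
  unfolding sdf_absorbing_def
proof (intro conjI allI impI)
  show "hyperideal m P"
    using assms(4) unfolding strong_C_hyperideal_def by blast
  show "P \<noteq> UNIV"
    by fact
  fix x y :: 'a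
  have char_2: "\<And>z::'a. z + z = 0"
    using assms(3) by (rule has_characteristic_2_add_self)
  assume "set_minus (m x x) (m y y) \<subseteq> P"
  then have "m (x + y) (x + y) \<subseteq> P"
    using strong_C_hyperideal_square_add_subset assms(1,4) char_2 by blast
  then have "x + y \<in> P"
    using mem_hrad_if_square_subset assms(6) by metis
  then show "x - y \<in> P \<or> x + y \<in> P"
    by blast
qed

end
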